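(* In the adversarial edge arrival model for fractional matchings, no online algorithm achieves a guarantee larger than $0.58884$ on bipartite graphs of maximum degree four. In particular, since $0.58884 < \frac{4}{9-\sqrt5}$, the guarantee $\frac{4}{9-\sqrt5}$ is not achievable on graphs of maximum degree four.
   Context: Adversarial edge arrival model for fractional matchings: edges arrive one at a time in an adversarial order; on arrival of $e$ the algorithm irrevocably assigns $y_e\ge0$ so that for every vertex $w$, $\sum_{f\in\delta(w)}y_f\le 1$ at all times. An algorithm achieves guarantee $\gamma$ if at every timepoint $\sum_e y_e\ge\gamma\,\nu(G_t)$, where $\nu(G_t)$ is the maximum matching cardinality of the graph of arrived edges. *)

theory Defs
  imports Complex_Main
begin

text \<open>Vertices are natural numbers (an unbounded supply, so the adversary may
introduce fresh vertices). An edge is a two-element vertex set.\<close>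

type_synonym edge = "nat set"

definition is_matching :: "edge set \<Rightarrow> bool" where
  "is_matching M \<longleftrightarrow> (\<forall>e\<in>M. \<forall>f\<in>M. e \<noteq> f \<longrightarrow> e \<inter> f = {})"

definition matching_number :: "edge set \<Rightarrow> nat" where
  "matching_number E = Max {card M | M. M \<subseteq> E \<and> is_matching M}"

definition bipartite :: "edge set \<Rightarrow> bool" where
  "bipartite E \<longleftrightarrow> (\<exists>A. \<forall>e\<in>E. card (e \<inter> A) = 1)"

definition max_degree_le :: "edge set \<Rightarrow> nat \<Rightarrow> bool" where
  "max_degree_le E d \<longleftrightarrow> (\<forall>v. card {e\<in>E. v \<in> e} \<le> d)"

definition admissible_seq :: "edge list \<Rightarrow> bool" where
  "admissible_seq es \<longleftrightarrow> distinct es \<and> (\<forall>e\<in>set es. card e = 2)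
     \<and> bipartite (set es) \<and> max_degree_le (set es) 4"

text \<open>A deterministic online algorithm is a function alg: on the arrival
of the last edge of the current sequence es, it irrevocably assigns the
value alg es to that edge; this value depends only on the edges arrived
so far.\<close>
definition alg_val :: "(edge list \<Rightarrow> real) \<Rightarrow> edge list \<Rightarrow> nat \<Rightarrow> real" where
  "alg_val alg es i = alg (take (Suc i) es)"

text \<open>Feasibility: nonnegative values and every vertex load at most 1
(on all admissible sequences, hence at all times since prefixes are admissible).\<close>
definition feasible_online :: "(edge list \<Rightarrow> real) \<Rightarrow> bool" where
  "feasible_online alg \<longleftrightarrow> (\<forall>es. admissible_seq es \<longrightarrow>
      (\<forall>i<length es. alg_val alg es i \<ge> 0) \<and>
      (\<forall>w. (\<Sum>i | i < length es \<and> w \<in> es ! i. alg_val alg es i) \<le> 1))"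

definition achieves_guarantee :: "(edge list \<Rightarrow> real) \<Rightarrow> real \<Rightarrow> bool" where
  "achieves_guarantee alg \<gamma> \<longleftrightarrow> (\<forall>es. admissible_seq es \<longrightarrow>
      (\<Sum>i<length es. alg_val alg es i) \<ge> \<gamma> * real (matching_number (set es)))"

end

theory Submission
  imports Defs "HOL-Library.Sublist"
begin

text \<open>An online algorithm's value on an edge depends only on the prefix that has arrived, so
  arrival sequences sharing a prefix share the values assigned along it. The adversary uses six
  branches of one decision tree on bipartite graphs of maximum degree four; branch k has a perfect
  matching of size k, forcing total value at least k\<gamma>. With weights 2, 2, 1, 1, 1, 1 the
  total values of the branches add up exactly to the loads of 14 vertices, each at most 1. Hence
  24\<gamma> \<le> 14, i.e. \<gamma> \<le> 7/12 < 0.58884.\<close>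

definition total_value :: "('a list \<Rightarrow> real) \<Rightarrow> 'a list \<Rightarrow> real" where
  "total_value alg es = (\<Sum>p\<leftarrow>tl (prefixes es). alg p)"

definition vertex_load :: "('a set list \<Rightarrow> real) \<Rightarrow> 'a set list \<Rightarrow> 'a \<Rightarrow> real" where
  "vertex_load alg es w = (\<Sum>p\<leftarrow>tl (prefixes es). if w \<in> last p then alg p else 0)"

lemma prefixes_conv_take: "prefixes xs = map (\<lambda>n. take n xs) [0..<Suc (length xs)]"
  by (induction xs) (simp_all add: map_upt_Suc del: upt_Suc)

lemma tl_prefixes_conv_take: "tl (prefixes xs) = map (\<lambda>i. take (Suc i) xs) [0..<length xs]"
  by (simp add: prefixes_conv_take map_upt_Suc del: upt_Suc)

lemma sum_alg_val_eq_total_value: "(\<Sum>i<length es. alg_val alg es i) = total_value alg es"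
  by (simp add: total_value_def alg_val_def tl_prefixes_conv_take interv_sum_list_conv_sum_set_nat
      atLeast0LessThan comp_def)

lemma sum_alg_val_incident_eq_vertex_load:
  "(\<Sum>i | i < length es \<and> w \<in> es ! i. alg_val alg es i) = vertex_load alg es w"
proof -
  have "(\<Sum>i | i < length es \<and> w \<in> es ! i. alg_val alg es i)
      = (\<Sum>i<length es. if w \<in> es ! i then alg_val alg es i else 0)"
    by (simp add: sum.If_cases Collect_conj_eq lessThan_def Int_commute)
  also have "\<dots> = vertex_load alg es w"
    unfolding alg_val_def
    by (simp add: vertex_load_def tl_prefixes_conv_take interv_sum_list_conv_sum_set_nat
        atLeast0LessThan take_Suc_conv_app_nth)
  finally show ?thesis .
qed

lemma max_degree_leI:
  assumes "\<forall>v\<in>\<Union>(set es). length (filter (\<lambda>e. v \<in> e) es) \<le> d"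
  shows "max_degree_le (set es) d"
  unfolding max_degree_le_def
proof
  fix v
  have "card {e\<in>set es. v \<in> e} = card (set (filter (\<lambda>e. v \<in> e) es))" by simp
  also have "\<dots> \<le> length (filter (\<lambda>e. v \<in> e) es)" by (rule card_length)
  also have "\<dots> \<le> d"
  proof (cases "v \<in> \<Union>(set es)")
    case True
    then show ?thesis using assms by blast
  next
    case False
    then have "filter (\<lambda>e. v \<in> e) es = []" by (auto simp: filter_empty_conv)
    then show ?thesis by simp
  qed
  finally show "card {e\<in>set es. v \<in> e} \<le> d" .
qed

lemma admissible_seqI:
  assumes "distinct es"
    and "\<forall>e\<in>set es. card e = 2 \<and> card (e \<inter> A) = 1"
    and "\<forall>v\<in>\<Union>(set es). length (filter (\<lambda>e. v \<in> e) es) \<le> 4"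
  shows "admissible_seq es"
  using assms max_degree_leI[OF assms(3)]
  unfolding admissible_seq_def bipartite_def by blast

lemma card_le_matching_number:
  assumes "finite E" "M \<subseteq> E" "is_matching M"
  shows "card M \<le> matching_number E"
  unfolding matching_number_def
  using assms by (intro Max_ge) auto

lemma total_value_ge_guarantee:
  assumes "achieves_guarantee alg \<gamma>" "admissible_seq es" "0 \<le> \<gamma>"
    and "k \<le> matching_number (set es)"
  shows "\<gamma> * k \<le> total_value alg es"
proof -
  have "\<gamma> * k \<le> \<gamma> * matching_number (set es)"
    using assms(3,4) by (simp add: mult_left_mono)
  also have "\<dots> \<le> total_value alg es"
    using assms(1,2) by (simp add: achieves_guarantee_def sum_alg_val_eq_total_value)
  finally show ?thesis .
qed

lemma vertex_load_le_one:
  assumes "feasible_online alg" "admissible_seq es"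
  shows "vertex_load alg es w \<le> 1"
  using assms by (simp add: feasible_online_def sum_alg_val_incident_eq_vertex_load)

lemma sum_vertex_load_le:
  assumes "feasible_online alg" "admissible_seq es"
  shows "(\<Sum>w<n. vertex_load alg es w) \<le> n"
  using sum_bounded_above[of "{..<n}" "vertex_load alg es" 1] vertex_load_le_one[OF assms]
  by simp

text \<open>Branch k ends with pendant edges completing a perfect matching of size k. Branches 2 and 3
  extend their predecessor, branch 4 leaves branch 3 after four edges, branch 5 leaves branch 4
  after six, and branch 6 extends branch 5. Every edge joins an even to an odd vertex.\<close>

definition "adversary1 = [{0,1::nat}]"
definition "adversary2 = [{0,1},{0,3},{1,2::nat}]"
definition "adversary3 = [{0,1},{0,3},{1,2},{2,3},{1,6},{0,7::nat}]"
definition "adversary4 = [{0,1},{0,3},{1,2},{2,3},{2,5},{3,4},{1,6},{0,7::nat}]"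
definition "adversary5 = [{0,1},{0,3},{1,2},{2,3},{2,5},{3,4},{4,5},{0,7},{1,6},{3,8},{2,9::nat}]"
definition "adversary6 = adversary5 @ [{5,10},{4,11}]"

lemmas adversary_defs =
  adversary1_def adversary2_def adversary3_def adversary4_def adversary5_def adversary6_def

lemma admissible_adversaries:
  "admissible_seq adversary1" "admissible_seq adversary2" "admissible_seq adversary3"
  "admissible_seq adversary4" "admissible_seq adversary5" "admissible_seq adversary6"
  by (rule admissible_seqI[where A = "{v. even v}"]; simp add: adversary_defs doubleton_eq_iff)+

lemma matching_number_adversaries:
  "1 \<le> matching_number (set adversary1)" "2 \<le> matching_number (set adversary2)"
  "3 \<le> matching_number (set adversary3)" "4 \<le> matching_number (set adversary4)"
  "5 \<le> matching_number (set adversary5)" "6 \<le> matching_number (set adversary6)"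
proof -
  have bound: "card M \<le> matching_number (set es)"
    if "M \<subseteq> set es" "is_matching M" for M es
    using card_le_matching_number[OF List.finite_set that] .
  show "1 \<le> matching_number (set adversary1)"
    using bound[of "{{0,1}}" adversary1] by (simp add: adversary_defs is_matching_def)
  show "2 \<le> matching_number (set adversary2)"
    using bound[of "{{0,3},{1,2}}" adversary2]
    by (auto simp: adversary_defs is_matching_def doubleton_eq_iff)
  show "3 \<le> matching_number (set adversary3)"
    using bound[of "{{0,7},{1,6},{2,3}}" adversary3]
    by (auto simp: adversary_defs is_matching_def doubleton_eq_iff)
  show "4 \<le> matching_number (set adversary4)"
    using bound[of "{{0,7},{1,6},{2,5},{3,4}}" adversary4]
    by (auto simp: adversary_defs is_matching_def doubleton_eq_iff)
  show "5 \<le> matching_number (set adversary5)"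
    using bound[of "{{0,7},{1,6},{3,8},{2,9},{4,5}}" adversary5]
    by (auto simp: adversary_defs is_matching_def doubleton_eq_iff)
  show "6 \<le> matching_number (set adversary6)"
    using bound[of "{{0,7},{1,6},{3,8},{2,9},{5,10},{4,11}}" adversary6]
    by (auto simp: adversary_defs is_matching_def doubleton_eq_iff)
qed

text \<open>Every arrival prefix is counted equally often on both sides: this is the dual certificate
  of the adversary's linear program.\<close>

lemma adversary_values_eq_loads:
  "2 * total_value alg adversary1 + 2 * total_value alg adversary2 + total_value alg adversary3
     + total_value alg adversary4 + total_value alg adversary5 + total_value alg adversary6
   = (\<Sum>w<2. vertex_load alg adversary3 w) + (\<Sum>w<2. vertex_load alg adversary4 w)
     + (\<Sum>w<4. vertex_load alg adversary5 w) + (\<Sum>w<6. vertex_load alg adversary6 w)"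
  by (simp add: total_value_def vertex_load_def adversary_defs numeral_eq_Suc lessThan_Suc
      algebra_simps)

lemma online_guarantee_le_7_12:
  assumes "feasible_online alg" "achieves_guarantee alg \<gamma>"
  shows "\<gamma> \<le> 7/12"
proof (cases "0 \<le> \<gamma>")
  case True
  note guarantee = total_value_ge_guarantee[OF assms(2) _ True]
  note feasibility = sum_vertex_load_le[OF assms(1)]
  have "\<gamma> * 24 \<le> 2 * total_value alg adversary1 + 2 * total_value alg adversary2
      + total_value alg adversary3 + total_value alg adversary4 + total_value alg adversary5
      + total_value alg adversary6"
    using guarantee[OF admissible_adversaries(1) matching_number_adversaries(1)]
      guarantee[OF admissible_adversaries(2) matching_number_adversaries(2)]
      guarantee[OF admissible_adversaries(3) matching_number_adversaries(3)]
      guarantee[OF admissible_adversaries(4) matching_number_adversaries(4)]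
      guarantee[OF admissible_adversaries(5) matching_number_adversaries(5)]
      guarantee[OF admissible_adversaries(6) matching_number_adversaries(6)]
    by simp
  also have "\<dots> \<le> 14"
    unfolding adversary_values_eq_loads
    using feasibility[OF admissible_adversaries(3), of 2]
      feasibility[OF admissible_adversaries(4), of 2]
      feasibility[OF admissible_adversaries(5), of 4]
      feasibility[OF admissible_adversaries(6), of 6]
    by simp
  finally show ?thesis by simp
qed simp

lemma seven_twelfths_less: "7/12 < 4 / (9 - sqrt 5)"
proof -
  have "15/7 < sqrt 5" by (rule real_less_rsqrt) (simp add: power2_eq_square)
  moreover have "sqrt 5 < 9" by (rule real_less_lsqrt) (simp_all add: power2_eq_square)
  ultimately show ?thesis by (simp add: field_simps)
qed

theorem mainTheorem3:
  fixes alg :: "edge list \<Rightarrow> real" and \<gamma> :: real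
  assumes "feasible_online alg"
    and "achieves_guarantee alg \<gamma>"
  shows "\<gamma> \<le> 0.58884 \<and> \<gamma> < 4 / (9 - sqrt 5)"
  using online_guarantee_le_7_12[OF assms] seven_twelfths_less by simp

end
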